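(* Let $N(T)$ be a net on a grid $T$ with lines $s_i$, $t_j$. Suppose that $\|[\sigma_1,\sigma_2;\tau_1,\tau_2]N\|_\infty\le L$ holds (a) whenever $\sigma_1=s_i$, $\sigma_2=s_{i+1}$ and $\tau_1\ne\tau_2$ with $t_j\le\tau_1,\tau_2\le t_{j+1}$, for some $i,j\in\mathbb{Z}$, and (b) whenever $\tau_1=t_j$, $\tau_2=t_{j+1}$ and $\sigma_1\ne\sigma_2$ with $s_i\le\sigma_1,\sigma_2\le s_{i+1}$, for some $i,j\in\mathbb{Z}$. Then $N(T)$ has the BMSDD property with constant $L$.
   Context: For strictly increasing bi-infinite real sequences $(s_i)_{i\in\mathbb{Z}}$, $(t_j)_{j\in\mathbb{Z}}$, unbounded above and below, the grid is $T=\bigcup_i\{s_i\}\times\mathbb{R}\ \cup\ \bigcup_j\mathbb{R}\times\{t_j\}$; a net $N(T)$ is a function on $T$ with values in $\mathbb{R}^m$. For $\sigma_1\ne\sigma_2$, $\tau_1\ne\tau_2$, $[\sigma_1,\sigma_2;\tau_1,\tau_2]N=\frac{N(\sigma_1,\tau_1)+N(\sigma_2,\tau_2)-N(\sigma_2,\tau_1)-N(\sigma_1,\tau_2)}{(\sigma_1-\sigma_2)(\tau_1-\tau_2)}$. The net has the BMSDD property with constant $L$ if $\|[\sigma_1,\sigma_2;\tau_1,\tau_2]N\|_\infty\le L$ for all $\sigma_1\ne\sigma_2$, $\tau_1\ne\tau_2$ with $(\sigma_i,\tau_j)\in T$ for all $i,j\in\{1,2\}$. *)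

theory Defs
  imports "HOL-Analysis.Analysis"
begin

definition grid_seq :: "(int \<Rightarrow> real) \<Rightarrow> bool" where
  "grid_seq s \<longleftrightarrow> strict_mono s \<and> (\<forall>M. \<exists>i. s i > M) \<and> (\<forall>M. \<exists>i. s i < M)"

definition grid :: "(int \<Rightarrow> real) \<Rightarrow> (int \<Rightarrow> real) \<Rightarrow> (real \<times> real) set" where
  "grid s t = {(x, y). (\<exists>i. x = s i) \<or> (\<exists>j. y = t j)}"

definition mdd :: "(real \<times> real \<Rightarrow> real ^ 'm) \<Rightarrow> real \<Rightarrow> real \<Rightarrow> real \<Rightarrow> real \<Rightarrow> real ^ 'm" where
  "mdd N s1 s2 t1 t2 =
     (1 / ((s1 - s2) * (t1 - t2))) *\<^sub>R (N (s1, t1) + N (s2, t2) - N (s2, t1) - N (s1, t2))"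

definition bmsdd :: "(int \<Rightarrow> real) \<Rightarrow> (int \<Rightarrow> real) \<Rightarrow> (real \<times> real \<Rightarrow> real ^ 'm) \<Rightarrow> real \<Rightarrow> bool" where
  "bmsdd s t N L \<longleftrightarrow>
     (\<forall>s1 s2 t1 t2. s1 \<noteq> s2 \<and> t1 \<noteq> t2 \<and>
        (s1, t1) \<in> grid s t \<and> (s1, t2) \<in> grid s t \<and> (s2, t1) \<in> grid s t \<and> (s2, t2) \<in> grid s t
        \<longrightarrow> infnorm (mdd N s1 s2 t1 t2) \<le> L)"

end

theory Submission
  imports Defs
begin

text \<open>Multiplied out, the hypotheses say that the increment of N over a rectangle is bounded by
  L times its area whenever the rectangle is bounded by two consecutive lines of one family and
  lies in a strip between two consecutive lines of the other. The increment is additive under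
  subdividing a rectangle, so the bound first extends along each such strip (by splitting an
  arbitrary interval at the grid points it contains) and then across any number of strips. A
  rectangle with corners in the grid has either both vertical sides or both horizontal sides on
  grid lines, so one of these two extensions covers it.\<close>

lemma grid_seq_strict_mono: "grid_seq t \<Longrightarrow> strict_mono t"
  unfolding grid_seq_def by blast

lemma grid_seq_cell:
  assumes "grid_seq t"
  obtains j where "t j \<le> x" "x < t (j + 1)"
proof -
  have mono: "strict_mono t" using assms by (rule grid_seq_strict_mono)
  obtain i0 i1 where i0: "t i0 < x" and i1: "x < t i1"
    using assms unfolding grid_seq_def by blast
  define J where "J = {j. i0 \<le> j \<and> t j \<le> x}"
  have "J \<subseteq> {i0..i1}"
  proof
    fix j assume "j \<in> J"
    then have "i0 \<le> j" "t j < t i1" using i1 by (auto simp: J_def)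
    then show "j \<in> {i0..i1}" using mono by (auto simp: strict_mono_less)
  qed
  then have "finite J" by (rule finite_subset) simp
  moreover have "i0 \<in> J" using i0 by (simp add: J_def)
  ultimately have "Max J \<in> J" and max: "\<And>j. j \<in> J \<Longrightarrow> j \<le> Max J"
    by (auto intro: Max_in)
  then have below: "t (Max J) \<le> x" "i0 \<le> Max J" by (auto simp: J_def)
  have "Max J + 1 \<notin> J" using max[of "Max J + 1"] by linarith
  then have "x < t (Max J + 1)" using below by (auto simp: J_def)
  with below show thesis by (intro that)
qed

lemma additive_self:
  fixes F :: "'x \<Rightarrow> 'x \<Rightarrow> 'a::group_add"
  assumes "\<And>a b c. F a c = F a b + F b c"
  shows "F a a = 0"
proof -
  have "F a a + F a a = F a a + 0" using assms[of a a a] by simp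
  then show ?thesis by (rule add_left_imp_eq)
qed

lemma additive_swap:
  fixes F :: "'x \<Rightarrow> 'x \<Rightarrow> 'a::group_add"
  assumes "\<And>a b c. F a c = F a b + F b c"
  shows "F b a = - F a b"
proof -
  have "F a b + F b a = 0" using assms[of a a b] additive_self[where F = F, OF assms, of a] by simp
  then show ?thesis by (simp add: minus_unique)
qed

lemma additive_bound_on_grid_points:
  fixes t :: "int \<Rightarrow> real" and F :: "real \<Rightarrow> real \<Rightarrow> 'a::euclidean_space"
  assumes mono: "strict_mono t"
    and add: "\<And>a b c. F a c = F a b + F b c"
    and step: "\<And>j. infnorm (F (t j) (t (j + 1))) \<le> K * (t (j + 1) - t j)"
  shows "infnorm (F (t j) (t k)) \<le> K * \<bar>t k - t j\<bar>"
proof -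
  have upward: "infnorm (F (t j) (t k)) \<le> K * (t k - t j)" if "j \<le> k" for j k :: int
  proof (rule int_ge_induct[OF that])
    show "infnorm (F (t j) (t j)) \<le> K * (t j - t j)"
      by (simp add: additive_self[where F = F, OF add] infnorm_0)
  next
    fix k assume IH: "infnorm (F (t j) (t k)) \<le> K * (t k - t j)"
    have "infnorm (F (t j) (t (k + 1))) \<le> infnorm (F (t j) (t k)) + infnorm (F (t k) (t (k + 1)))"
      unfolding add[of "t j" "t (k + 1)" "t k"] by (rule infnorm_triangle)
    also have "\<dots> \<le> K * (t (k + 1) - t j)"
      using IH step[of k] by (simp add: algebra_simps)
    finally show "infnorm (F (t j) (t (k + 1))) \<le> K * (t (k + 1) - t j)" .
  qed
  show ?thesis
  proof (cases "j \<le> k")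
    case True
    then show ?thesis using upward[OF True] mono by (simp add: strict_mono_less_eq)
  next
    case False
    then have "infnorm (F (t k) (t j)) \<le> K * (t j - t k)" by (intro upward) simp
    moreover have "t k \<le> t j" using False mono by (simp add: strict_mono_less_eq)
    ultimately show ?thesis by (simp add: additive_swap[where F = F, OF add, of "t j"] infnorm_neg)
  qed
qed

lemma additive_bound_from_cells:
  fixes F :: "real \<Rightarrow> real \<Rightarrow> 'a::euclidean_space"
  assumes grid: "grid_seq t"
    and add: "\<And>a b c. F a c = F a b + F b c"
    and cell: "\<And>j a b. t j \<le> a \<Longrightarrow> a \<le> b \<Longrightarrow> b \<le> t (j + 1) \<Longrightarrow> infnorm (F a b) \<le> K * (b - a)"
  shows "infnorm (F a b) \<le> K * \<bar>b - a\<bar>"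
proof -
  have mono: "strict_mono t" using grid by (rule grid_seq_strict_mono)
  have points: "infnorm (F (t j) (t k)) \<le> K * \<bar>t k - t j\<bar>" for j k
    by (rule additive_bound_on_grid_points[OF mono add], rule cell)
      (use mono in \<open>auto simp: strict_mono_less_eq\<close>)
  have upward: "infnorm (F a b) \<le> K * (b - a)" if "a \<le> b" for a b
  proof -
    obtain j where j: "t j \<le> a" "a < t (j + 1)" using grid_seq_cell[OF grid] .
    obtain k where k: "t k \<le> b" "b < t (k + 1)" using grid_seq_cell[OF grid] .
    have "j \<le> k"
    proof (rule ccontr)
      assume "\<not> j \<le> k"
      then have "t (k + 1) \<le> t j" using mono by (simp add: strict_mono_less_eq)
      then show False using j k \<open>a \<le> b\<close> by linarith
    qed
    show ?thesis
    proof (cases "j = k")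
      case True
      then show ?thesis using cell j k \<open>a \<le> b\<close> by simp
    next
      case False
      then have "t (j + 1) \<le> t k" using \<open>j \<le> k\<close> mono by (simp add: strict_mono_less_eq)
      have split: "F a b = (F a (t (j + 1)) + F (t (j + 1)) (t k)) + F (t k) b"
        using add[of a b "t k"] add[of a "t k" "t (j + 1)"] by simp
      have "infnorm (F a b)
          \<le> infnorm (F a (t (j + 1))) + infnorm (F (t (j + 1)) (t k)) + infnorm (F (t k) b)"
        unfolding split
        using infnorm_triangle[of "F a (t (j + 1)) + F (t (j + 1)) (t k)" "F (t k) b"]
          infnorm_triangle[of "F a (t (j + 1))" "F (t (j + 1)) (t k)"] by linarith
      also have "\<dots> \<le> K * (t (j + 1) - a) + K * (t k - t (j + 1)) + K * (b - t k)"
        using cell[of j a "t (j + 1)"] cell[of k "t k" b] points[of "j + 1" k] j k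
          \<open>t (j + 1) \<le> t k\<close> by (intro add_mono) auto
      also have "\<dots> = K * (b - a)" by (simp add: algebra_simps)
      finally show ?thesis .
    qed
  qed
  show ?thesis
  proof (cases "a \<le> b")
    case True
    then show ?thesis using upward by simp
  next
    case False
    then show ?thesis using upward[of b a] by (simp add: additive_swap[where F = F, OF add, of b] infnorm_neg)
  qed
qed

definition rect_incr :: "(real \<times> real \<Rightarrow> 'a::ab_group_add) \<Rightarrow> real \<Rightarrow> real \<Rightarrow> real \<Rightarrow> real \<Rightarrow> 'a" where
  "rect_incr N a b c d = N (a, c) + N (b, d) - N (b, c) - N (a, d)"

lemma rect_incr_additive1: "rect_incr N a c x y = rect_incr N a b x y + rect_incr N b c x y"
  unfolding rect_incr_def by (simp add: algebra_simps)

lemma rect_incr_additive2: "rect_incr N x y a c = rect_incr N x y a b + rect_incr N x y b c"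
  unfolding rect_incr_def by (simp add: algebra_simps)

lemma rect_incr_transpose: "rect_incr (\<lambda>p. N (snd p, fst p)) a b c d = rect_incr N c d a b"
  unfolding rect_incr_def by (simp add: algebra_simps)

lemma mdd_transpose: "mdd (\<lambda>p. N (snd p, fst p)) a b c d = mdd N c d a b"
  unfolding mdd_def by (simp add: algebra_simps)

lemma infnorm_rect_incr_eq:
  "infnorm (rect_incr N a b c d) = \<bar>b - a\<bar> * \<bar>d - c\<bar> * infnorm (mdd N a b c d)"
  if "a \<noteq> b" "c \<noteq> d"
  using that unfolding mdd_def rect_incr_def infnorm_mul
  by (simp add: abs_mult abs_minus_commute)

lemma infnorm_rect_incr_le:
  assumes "a \<noteq> b \<Longrightarrow> c \<noteq> d \<Longrightarrow> infnorm (mdd N a b c d) \<le> L"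
  shows "infnorm (rect_incr N a b c d) \<le> L * \<bar>b - a\<bar> * \<bar>d - c\<bar>"
proof (cases "a = b \<or> c = d")
  case True
  then show ?thesis by (auto simp: rect_incr_def infnorm_0)
next
  case False
  then show ?thesis
    using assms by (simp add: infnorm_rect_incr_eq mult_left_mono mult.commute)
qed

lemma rect_incr_bound_between_grid_lines:
  fixes N :: "real \<times> real \<Rightarrow> real ^ 'm"
  assumes "grid_seq s" and "grid_seq t"
    and strip: "\<And>i j \<tau>1 \<tau>2. \<tau>1 \<noteq> \<tau>2 \<Longrightarrow> t j \<le> \<tau>1 \<Longrightarrow> \<tau>1 \<le> t (j + 1) \<Longrightarrow>
              t j \<le> \<tau>2 \<Longrightarrow> \<tau>2 \<le> t (j + 1) \<Longrightarrow> infnorm (mdd N (s i) (s (i + 1)) \<tau>1 \<tau>2) \<le> L"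
  shows "infnorm (rect_incr N (s i) (s k) c d) \<le> L * \<bar>s k - s i\<bar> * \<bar>d - c\<bar>"
proof -
  have mono: "strict_mono s" using \<open>grid_seq s\<close> by (rule grid_seq_strict_mono)
  have along_strip: "infnorm (rect_incr N (s i) (s (i + 1)) c d)
      \<le> L * (s (i + 1) - s i) * \<bar>d - c\<bar>" for i c d
  proof (rule additive_bound_from_cells[OF \<open>grid_seq t\<close> rect_incr_additive2])
    fix j a b assume "t j \<le> a" "a \<le> b" "b \<le> t (j + 1)"
    then have "infnorm (rect_incr N (s i) (s (i + 1)) a b) \<le> L * \<bar>s (i + 1) - s i\<bar> * \<bar>b - a\<bar>"
      by (intro infnorm_rect_incr_le strip) auto
    then show "infnorm (rect_incr N (s i) (s (i + 1)) a b) \<le> L * (s (i + 1) - s i) * (b - a)"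
      using mono \<open>a \<le> b\<close> by (simp add: strict_mono_less_eq)
  qed
  have "infnorm (rect_incr N (s i) (s k) c d) \<le> (L * \<bar>d - c\<bar>) * \<bar>s k - s i\<bar>"
    by (rule additive_bound_on_grid_points[OF mono rect_incr_additive1])
      (use along_strip in \<open>simp add: mult_ac\<close>)
  then show ?thesis by (simp add: mult_ac)
qed

theorem lemma3:
  fixes s t :: "int \<Rightarrow> real" and N :: "real \<times> real \<Rightarrow> real ^ 'm" and L :: real
  assumes "grid_seq s" and "grid_seq t"
    and a: "\<And>i j \<tau>1 \<tau>2. \<tau>1 \<noteq> \<tau>2 \<Longrightarrow> t j \<le> \<tau>1 \<Longrightarrow> \<tau>1 \<le> t (j + 1) \<Longrightarrow>
              t j \<le> \<tau>2 \<Longrightarrow> \<tau>2 \<le> t (j + 1) \<Longrightarrow> infnorm (mdd N (s i) (s (i + 1)) \<tau>1 \<tau>2) \<le> L"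
    and b: "\<And>i j \<sigma>1 \<sigma>2. \<sigma>1 \<noteq> \<sigma>2 \<Longrightarrow> s i \<le> \<sigma>1 \<Longrightarrow> \<sigma>1 \<le> s (i + 1) \<Longrightarrow>
              s i \<le> \<sigma>2 \<Longrightarrow> \<sigma>2 \<le> s (i + 1) \<Longrightarrow> infnorm (mdd N \<sigma>1 \<sigma>2 (t j) (t (j + 1))) \<le> L"
  shows "bmsdd s t N L"
  unfolding bmsdd_def
proof (intro allI impI, elim conjE)
  fix s1 s2 t1 t2 assume "s1 \<noteq> s2" "t1 \<noteq> t2"
    and corners: "(s1, t1) \<in> grid s t" "(s1, t2) \<in> grid s t" "(s2, t1) \<in> grid s t" "(s2, t2) \<in> grid s t"
  have vertical: "infnorm (rect_incr N (s i) (s k) c d) \<le> L * \<bar>s k - s i\<bar> * \<bar>d - c\<bar>" for i k c d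
    by (rule rect_incr_bound_between_grid_lines[OF assms(1-3)])
  have horizontal: "infnorm (rect_incr N c d (t j) (t k)) \<le> L * \<bar>d - c\<bar> * \<bar>t k - t j\<bar>" for j k c d
    using rect_incr_bound_between_grid_lines[of t s "\<lambda>p. N (snd p, fst p)" L j k c d]
      assms(1,2) b
    by (simp add: mdd_transpose rect_incr_transpose mult_ac)
  have "(\<exists>i k. s1 = s i \<and> s2 = s k) \<or> (\<exists>j k. t1 = t j \<and> t2 = t k)"
    using corners unfolding grid_def by blast
  then have "infnorm (rect_incr N s1 s2 t1 t2) \<le> L * \<bar>s2 - s1\<bar> * \<bar>t2 - t1\<bar>"
    using vertical horizontal by blast
  then show "infnorm (mdd N s1 s2 t1 t2) \<le> L"
    using \<open>s1 \<noteq> s2\<close> \<open>t1 \<noteq> t2\<close> by (simp add: infnorm_rect_incr_eq mult_ac)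
qed

end
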